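(* For every positive integer $n$ and every prime $p$, there exists $k_0$ such that for every integer $k\ge k_0$ the number $np^k$ satisfies Condition 1 with $p$ and another prime; that is, there is a prime $q\neq p$ such that for every integer $j$ with $1\le j\le np^k-1$, the binomial coefficient $\binom{np^k}{j}$ is divisible by $p$ or by $q$.
   Context: A positive integer $N$ satisfies Condition 1 with primes $p$ and $q$ if for all integers $j$ with $1\le j\le N-1$ the binomial coefficient $\binom{N}{j}$ is divisible by at least one of $p$ or $q$. *)

theory Defs
  imports "HOL-Computational_Algebra.Primes"
begin

definition condition1 :: "nat \<Rightarrow> nat \<Rightarrow> nat \<Rightarrow> bool" where
  "condition1 N p q \<longleftrightarrow>
     (\<forall>j::nat. 1 \<le> j \<and> j \<le> N - 1 \<longrightarrow> p dvd (N choose j) \<or> q dvd (N choose j))"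

end

theory Submission imports Defs begin

(* Write N = n p^k. By Legendre's formula a prime r divides (N choose j) as soon as the addition
   j + (N - j) carries at some power r^e, i.e. r^e \<le> j mod r^e + (N - j) mod r^e.
   If p^k does not divide j, there is a carry at p^k. Otherwise j = i p^k with 0 < i < n.
   Once p^k \<ge> n^n, some prime power q^e > n divides p^k + 1, because a number all of whose
   prime-power parts are at most n has at most n of them and so is at most n^n. As
   p^k \<equiv> -1 (mod q^e), the residues of i p^k and (n - i) p^k are q^e - i and q^e - (n - i),
   whose sum is at least q^e: again a carry. *)

lemma add_div_carry_iff:
  fixes a b Q :: nat
  assumes "0 < Q"
  shows "a div Q + b div Q < (a + b) div Q \<longleftrightarrow> Q \<le> a mod Q + b mod Q"
  using assms by (simp add: div_add1_eq[of a b] div_greater_zero_iff)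

lemma carry_if_dvd_add:
  fixes a b Q :: nat
  assumes "Q dvd a + b" and "\<not> Q dvd a"
  shows "Q \<le> a mod Q + b mod Q"
proof -
  have "(a mod Q + b mod Q) mod Q = 0"
    using assms(1) by (simp add: mod_add_eq)
  moreover have "0 < a mod Q"
    using assms(2) by (simp add: mod_eq_0_iff_dvd[symmetric] gr0I)
  ultimately show ?thesis
    by (metis add_gr_0 mod_less not_le neq0_conv)
qed

lemma mod_mult_add_self_if_dvd_Suc:
  fixes x c Q :: nat
  assumes "Q dvd x + 1" and "0 < c" and "c \<le> Q"
  shows "(c * x) mod Q + c = Q"
proof -
  have "Q dvd c * x + c"
    using dvd_mult[OF assms(1), of c] by (simp add: algebra_simps)
  then have "Q dvd (c * x) mod Q + c"
    using mod_add_left_eq[of "c * x" Q c] by (simp add: dvd_eq_mod_eq_0)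
  then obtain t where t: "(c * x) mod Q + c = Q * t" ..
  have "0 < Q" using assms by simp
  then have "Q * t < Q * 2"
    using t mod_less_divisor[of Q "c * x"] assms(3) by linarith
  moreover have "0 < t" using t assms(2) by (metis add_gr_0 mult_0_right neq0_conv)
  ultimately have "t = 1" by simp
  with t show ?thesis by simp
qed

lemma carry_if_dvd_Suc:
  fixes x i j Q :: nat
  assumes "Q dvd x + 1" and "0 < i" and "0 < j" and "i + j \<le> Q"
  shows "Q \<le> (i * x) mod Q + (j * x) mod Q"
  using mod_mult_add_self_if_dvd_Suc[OF assms(1), of i] mod_mult_add_self_if_dvd_Suc[OF assms(1), of j] assms
  by linarith

lemma exponent_less_prime_power:
  fixes q e :: nat
  assumes "prime q"
  shows "e < q ^ e"
  using less_exp[of e] power_mono[OF prime_ge_2_nat[OF assms], of e] by linarith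

lemma multiplicity_eq_count_dvd_powers:
  fixes q m M :: nat
  assumes "prime q" and "0 < m" and "m \<le> M"
  shows "multiplicity q m = (\<Sum>i=1..M. if q ^ i dvd m then 1 else 0)"
proof -
  have "multiplicity q m < q ^ multiplicity q m"
    using exponent_less_prime_power[OF assms(1)] .
  also have "\<dots> \<le> m"
    using multiplicity_dvd assms(2) by (rule dvd_imp_le)
  finally have "multiplicity q m \<le> M" using assms(3) by simp
  moreover have "q ^ i dvd m \<longleftrightarrow> i \<le> multiplicity q m" for i
    using assms(1,2) by (intro power_dvd_iff_le_multiplicity) auto
  ultimately have "{i \<in> {1..M}. q ^ i dvd m} = {1..multiplicity q m}"
    by (intro set_eqI) (simp only: mem_Collect_eq atLeastAtMost_iff, linarith)
  moreover have "(\<Sum>i=1..M. if q ^ i dvd m then 1 else 0) = card {i \<in> {1..M}. q ^ i dvd m}"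
    by (simp add: sum.inter_filter[symmetric])
  ultimately show ?thesis by simp
qed

lemma legendre_multiplicity_fact:
  fixes q n M :: nat
  assumes "prime q" and "n \<le> M"
  shows "multiplicity q (fact n) = (\<Sum>i=1..M. n div q ^ i)"
  using assms(2)
proof (induction n)
  case 0
  then show ?case by simp
next
  case (Suc n)
  have "multiplicity q (fact (Suc n) :: nat) = multiplicity q (Suc n * fact n)"
    by (simp only: fact_Suc of_nat_id)
  also have "\<dots> = multiplicity q (Suc n) + multiplicity q (fact n :: nat)"
    using assms(1) by (intro prime_elem_multiplicity_mult_distrib) auto
  also have "\<dots> = (\<Sum>i=1..M. (if q ^ i dvd Suc n then 1 else 0) + n div q ^ i)"
    using Suc assms(1) by (simp add: multiplicity_eq_count_dvd_powers sum.distrib)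
  also have "\<dots> = (\<Sum>i=1..M. Suc n div q ^ i)"
    using prime_gt_0_nat[OF assms(1)] by (intro sum.cong refl) (simp add: div_Suc mod_eq_0_iff_dvd)
  finally show ?case .
qed

lemma prime_dvd_choose_if_carry:
  fixes q e a b :: nat
  assumes "prime q" and carry: "q ^ e \<le> a mod q ^ e + b mod q ^ e"
  shows "q dvd (a + b choose a)"
proof -
  define M where "M = a + b"
  let ?legendre = "\<lambda>x. \<Sum>i=1..M. x div q ^ i"
  have carry_div: "a div q ^ e + b div q ^ e < M div q ^ e"
    using carry prime_gt_0_nat[OF assms(1)] unfolding M_def by (simp add: add_div_carry_iff)
  then have "e \<noteq> 0" by (cases "e = 0") (simp_all add: M_def)
  moreover have "e < q ^ e" using exponent_less_prime_power[OF assms(1)] .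
  moreover have "q ^ e \<le> M"
    using carry_div by (metis div_less less_nat_zero_code not_le)
  ultimately have e: "e \<in> {1..M}" by simp
  have legendre: "multiplicity q (fact x :: nat) = ?legendre x" if "x \<le> M" for x
    using legendre_multiplicity_fact[OF assms(1) that] .
  have "multiplicity q (fact a :: nat) + multiplicity q (fact b :: nat) = ?legendre a + ?legendre b"
    by (simp add: legendre M_def)
  also have "\<dots> = (\<Sum>i\<in>{1..M}. a div q ^ i + b div q ^ i)"
    by (simp add: sum.distrib)
  also have "\<dots> < ?legendre M"
    using carry_div e by (intro sum_strict_mono_ex1) (auto simp: M_def div_add1_eq[of a b])
  also have "\<dots> = multiplicity q (fact M :: nat)"
    by (simp add: legendre)
  finally have "multiplicity q (fact a :: nat) + multiplicity q (fact b :: nat) < multiplicity q (fact M :: nat)" .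
  moreover have "fact M = fact a * fact b * (M choose a)"
    using binomial_fact_lemma[of a M] by (simp add: M_def)
  then have "multiplicity q (fact M :: nat)
      = multiplicity q (fact a :: nat) + multiplicity q (fact b :: nat) + multiplicity q (M choose a)"
    using assms(1) by (simp add: prime_elem_multiplicity_mult_distrib M_def)
  ultimately have "0 < multiplicity q (M choose a)" by linarith
  then show ?thesis
    using not_dvd_imp_multiplicity_0 unfolding M_def by fastforce
qed

lemma exists_prime_power_dvd_gt:
  fixes n y :: nat
  assumes "0 < n" and "n ^ n < y"
  shows "\<exists>q e. prime q \<and> q ^ e dvd y \<and> n < q ^ e"
proof (rule ccontr)
  assume "\<not> ?thesis"
  then have small: "q ^ multiplicity q y \<le> n" if "q \<in> prime_factors y" for q
    using that by (meson in_prime_factors_imp_prime multiplicity_dvd not_le)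
  have "prime_factors y \<subseteq> {1..n}"
  proof
    fix q assume q: "q \<in> prime_factors y"
    then have "prime q" "0 < multiplicity q y"
      by (auto simp: prime_factors_multiplicity)
    then have "q ^ 1 \<le> q ^ multiplicity q y"
      by (intro power_increasing) (simp_all add: Suc_le_eq prime_gt_0_nat)
    with small[OF q] \<open>prime q\<close> show "q \<in> {1..n}"
      by (simp add: Suc_le_eq prime_gt_0_nat)
  qed
  then have "card (prime_factors y) \<le> n"
    using card_mono[of "{1..n}"] by simp
  then have "(\<Prod>q \<in> prime_factors y. q ^ multiplicity q y) \<le> n ^ n"
    using small assms(1) by (intro prod_le_power) auto
  then have "y \<le> n ^ n"
    using prime_factorization_nat[of y] assms by simp
  with assms(2) show False by simp
qed

lemma condition1_mult_prime_power:
  fixes n p q k e :: nat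
  assumes "prime p" and "prime q" and "q ^ e dvd p ^ k + 1" and "n \<le> q ^ e"
  shows "condition1 (n * p ^ k) p q"
  unfolding condition1_def
proof (intro allI impI)
  fix j assume j: "1 \<le> j \<and> j \<le> n * p ^ k - 1"
  show "p dvd (n * p ^ k choose j) \<or> q dvd (n * p ^ k choose j)"
  proof (cases "p ^ k dvd j")
    case False
    have sum: "j + (n * p ^ k - j) = n * p ^ k"
      using j by linarith
    have "p ^ k \<le> j mod p ^ k + (n * p ^ k - j) mod p ^ k"
      using False by (intro carry_if_dvd_add) (simp_all add: sum)
    then have "p dvd (j + (n * p ^ k - j) choose j)"
      by (rule prime_dvd_choose_if_carry[OF assms(1)])
    then show ?thesis by (simp add: sum)
  next
    case True
    then obtain i where i: "j = i * p ^ k" by (metis dvd_def mult.commute)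
    with j have "0 < i" by (auto intro: gr0I)
    moreover
    from i j have "i * p ^ k < n * p ^ k" by linarith
    then have "i < n" by simp
    ultimately have "q ^ e \<le> (i * p ^ k) mod q ^ e + ((n - i) * p ^ k) mod q ^ e"
      using assms(3,4) by (intro carry_if_dvd_Suc) simp_all
    then have "q dvd (i * p ^ k + (n - i) * p ^ k choose (i * p ^ k))"
      by (rule prime_dvd_choose_if_carry[OF assms(2)])
    moreover have "i * p ^ k + (n - i) * p ^ k = n * p ^ k"
      using \<open>i < n\<close> by (simp add: add_mult_distrib[symmetric])
    ultimately show ?thesis using i by simp
  qed
qed

theorem mainTheorem1:
  fixes n p :: nat
  assumes "n > 0" and "prime p"
  shows "\<exists>k0::nat. \<forall>k::nat. k \<ge> k0 \<longrightarrow>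
           (\<exists>q::nat. prime q \<and> q \<noteq> p \<and> condition1 (n * p ^ k) p q)"
proof (rule exI[of _ "n * n"], intro allI impI)
  fix k assume k: "n * n \<le> k"
  have "n ^ n \<le> (2 ^ n) ^ n"
    using less_exp[of n] by (simp add: power_mono)
  also have "\<dots> \<le> p ^ k"
    using k prime_ge_2_nat[OF assms(2)]
    by (simp add: power_mult[symmetric] order_trans[OF power_increasing power_mono])
  finally obtain q e where q: "prime q" "q ^ e dvd p ^ k + 1" "n < q ^ e"
    using exists_prime_power_dvd_gt[OF assms(1), of "p ^ k + 1"] by auto
  have "q \<noteq> p"
  proof
    assume "q = p"
    moreover have "0 < e" "0 < k" using q(3) k assms(1) by (auto intro: gr0I)
    ultimately have "p dvd p ^ k + 1" "p dvd p ^ k"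
      using q(2) by (auto intro: dvd_trans[OF dvd_power])
    with assms(2) show False
      by (metis dvd_add_right_iff not_prime_unit)
  qed
  with q show "\<exists>q. prime q \<and> q \<noteq> p \<and> condition1 (n * p ^ k) p q"
    using condition1_mult_prime_power[OF assms(2)] by (meson less_imp_le)
qed

end
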